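(* Let $\alpha$ be a composition, $w\in CRHW_n$ with $w(\alpha)=\beta\neq0$, $\tau=\tau_w$, and let $j\ge1$ belong to $\mathrm{supp}(w)$ but not be its maximum. If $j\in\mathrm{leg}(w)$, then (i) the greatest entry of $\tau$ in column $j$ is strictly greater than the greatest entry of $\tau$ in column $j+1$, and (ii) every other entry of $\tau$ in column $j$ is strictly smaller than the smallest entry of $\tau$ in column $j+1$.
   Context: Box-adding operators on compositions $\alpha=(\alpha_1,\dots,\alpha_k)$: $\mathfrak t_1(\alpha)=(1,\alpha_1,\dots,\alpha_k)$ (a new row on top); for $i\ge2$, $\mathfrak t_i(\alpha)$ increases the leftmost part equal to $i-1$ by $1$ (adding a box in column $i$), and is $0$ if there is no such part; $\mathfrak t_i(0)=0$. Diagrams: row $i$ has $\alpha_i$ left-justified boxes, rows numbered top to bottom. A word $w=\mathfrak t_{i_1}\cdots\mathfrak t_{i_n}$ acts by $w(\alpha)=\mathfrak t_{i_1}(\cdots\mathfrak t_{i_n}(\alpha))$. It is a reverse $k$-hookword if $i_1\le\cdots\le i_{k+1}>i_{k+2}>\cdots>i_n$ ($0\le k\le n-1$), and then $\mathrm{leg}(w)=\{i_{k+1},\dots,i_n\}$. $\mathrm{supp}(w)=\{i_1,\dots,i_n\}$; $w$ is connected if $\mathrm{supp}(w)$ is a set of consecutive integers; $CRHW_n$ is the set of connected reverse hookwords of length $n$. If $w(\alpha)=\beta\ne0$, applying $\mathfrak t_{i_n},\dots,\mathfrak t_{i_1}$ successively adds one box at each step (the box added by $\mathfrak t_{i_m}$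 is in column $i_m$); $\tau_w$ is the filling of the set of added boxes in which the box added by $\mathfrak t_{i_m}$ has entry $m$. *)

theory Defs
  imports Main
begin

text \<open>Compositions are lists of positive naturals (part i = length of row i, rows
  numbered 1,2,... from top to bottom). The zero result is modelled by None.
  A word t_{i_1} ... t_{i_n} is the list [i_1, ..., i_n].\<close>

definition composition :: "nat list \<Rightarrow> bool" where
  "composition \<alpha> \<longleftrightarrow> (\<forall>x\<in>set \<alpha>. 0 < x)"

definition leftmost :: "nat list \<Rightarrow> nat \<Rightarrow> nat" where
  "leftmost \<alpha> a = (LEAST r. r < length \<alpha> \<and> \<alpha> ! r = a)"

definition t_op :: "nat \<Rightarrow> nat list \<Rightarrow> nat list option" where
  "t_op i \<alpha> =
     (if i = 0 then None
      else if i = 1 then Some (1 # \<alpha>)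
      else if i - 1 \<in> set \<alpha> then Some (\<alpha>[leftmost \<alpha> (i - 1) := i])
      else None)"

text \<open>w(alpha) = t_{i_1}( ... t_{i_n}(alpha)); t_i(0) = 0.\<close>
definition act :: "nat list \<Rightarrow> nat list \<Rightarrow> nat list option" where
  "act w \<alpha> = foldr (\<lambda>i x. Option.bind x (t_op i)) w (Some \<alpha>)"

text \<open>Reverse k-hookword: i_1 <= ... <= i_{k+1} > i_{k+2} > ... > i_n (0 <= k <= n-1).\<close>
definition is_rhook :: "nat list \<Rightarrow> nat \<Rightarrow> bool" where
  "is_rhook w k \<longleftrightarrow> k < length w \<and> sorted (take (Suc k) w) \<and> sorted_wrt (>) (drop k w)"

definition reverse_hookword :: "nat list \<Rightarrow> bool" where
  "reverse_hookword w \<longleftrightarrow> (\<exists>k. is_rhook w k)"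

definition leg :: "nat list \<Rightarrow> nat set" where
  "leg w = set (drop (THE k. is_rhook w k) w)"

definition supp :: "nat list \<Rightarrow> nat set" where
  "supp w = set w"

definition connected_word :: "nat list \<Rightarrow> bool" where
  "connected_word w \<longleftrightarrow> (\<exists>a b. supp w = {a..b})"

definition CRHW :: "nat \<Rightarrow> nat list set" where
  "CRHW n = {w. length w = n \<and> (\<forall>i\<in>set w. 1 \<le> i) \<and> reverse_hookword w \<and> connected_word w}"

text \<open>Fillings: partial maps from cells (row, column), both 1-based, to entries.
  For t_1 the new row is on top, so previously filled boxes move down one row.\<close>
type_synonym filling = "nat \<times> nat \<Rightarrow> nat option"

definition fill_step :: "nat \<Rightarrow> nat \<Rightarrow> nat list \<times> filling \<Rightarrow> (nat list \<times> filling) option" where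
  "fill_step i m st =
     (let \<alpha> = fst st; f = snd st in
      if i = 0 then None
      else if i = 1 then
        Some (1 # \<alpha>, \<lambda>(r, c). if r = 0 then None
                             else if r = 1 then (if c = 1 then Some m else None)
                             else f (r - 1, c))
      else if i - 1 \<in> set \<alpha> then
        Some (\<alpha>[leftmost \<alpha> (i - 1) := i], f((Suc (leftmost \<alpha> (i - 1)), i) := Some m))
      else None)"

text \<open>Apply t_{i_n}, then t_{i_{n-1}}, ..., then t_{i_1}; box added by t_{i_m} gets entry m.\<close>
definition fill_run :: "nat list \<Rightarrow> nat list \<Rightarrow> (nat list \<times> filling) option" where
  "fill_run w \<alpha> = foldr (\<lambda>m x. Option.bind x (fill_step (w ! (m - 1)) m))
                        [1..<Suc (length w)] (Some (\<alpha>, \<lambda>_. None))"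

definition tau :: "nat list \<Rightarrow> nat list \<Rightarrow> filling" where
  "tau w \<alpha> = (case fill_run w \<alpha> of Some (_, f) \<Rightarrow> f | None \<Rightarrow> (\<lambda>_. None))"

definition col_entries :: "filling \<Rightarrow> nat \<Rightarrow> nat set" where
  "col_entries \<tau> c = {e. \<exists>r. \<tau> (r, c) = Some e}"

end

theory Submission
  imports Defs
begin

text \<open>The entries of \<open>\<tau>\<^sub>w\<close> in column \<open>c\<close> are exactly the positions \<open>m\<close> with \<open>i\<^sub>m = c\<close>,
  since every letter adds one box in its own column. If \<open>j\<close> occurs
  at a leg position \<open>p\<close>, then \<open>p\<close> is the last occurrence of \<open>j\<close> and every occurrence of
  the larger letter \<open>j + 1\<close> precedes \<open>p\<close>; an earlier occurrence of \<open>j\<close> preceded by some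
  \<open>j + 1\<close> would break the weakly increasing arm. Connectedness guarantees that \<open>j + 1\<close>
  occurs at all.\<close>

lemma leftmost_nth:
  assumes "a \<in> set xs"
  shows "leftmost xs a < length xs" and "xs ! leftmost xs a = a"
  using LeastI_ex[of "\<lambda>r. r < length xs \<and> xs ! r = a"] assms
  by (auto simp: leftmost_def in_set_conv_nth)

definition filling_inside :: "nat list \<Rightarrow> filling \<Rightarrow> bool" where
  "filling_inside \<beta> f \<longleftrightarrow>
     (\<forall>r c e. f (r, c) = Some e \<longrightarrow> 1 \<le> r \<and> r \<le> length \<beta> \<and> c \<le> \<beta> ! (r - 1))"

lemma col_entries_fun_upd_fresh:
  assumes "f (r, c) = None"
  shows "col_entries (f((r, c) := Some m)) c' =
           (if c' = c then insert m (col_entries f c') else col_entries f c')"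
  using assms by (auto simp: col_entries_def) (metis option.distinct(1))+

lemma fill_step_new_row:
  assumes "filling_inside \<beta> f"
    and "fill_step 1 m (\<beta>, f) = Some (\<beta>', g)"
  shows "filling_inside \<beta>' g"
    and "col_entries g c = (if c = 1 then insert m (col_entries f c) else col_entries f c)"
proof -
  have \<beta>': "\<beta>' = 1 # \<beta>"
    and g: "g = (\<lambda>(r, c). if r = 0 then None
                         else if r = 1 then (if c = 1 then Some m else None)
                         else f (r - 1, c))"
    using assms(2) by (auto simp: fill_step_def Let_def)
  have row0: "f (0, c') = None" for c'
    using assms(1) unfolding filling_inside_def by (metis not_one_le_zero option.exhaust)
  show "filling_inside \<beta>' g"
    unfolding filling_inside_def
  proof (intro allI impI)
    fix r c e assume gr: "g (r, c) = Some e"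
    show "1 \<le> r \<and> r \<le> length \<beta>' \<and> c \<le> \<beta>' ! (r - 1)"
    proof (cases "r \<le> 1")
      case True
      with gr show ?thesis by (auto simp: g \<beta>' split: if_splits)
    next
      case False
      then have "f (r - 1, c) = Some e" using gr by (simp add: g)
      then have "r - 1 \<le> length \<beta> \<and> c \<le> \<beta> ! (r - 1 - 1)"
        using assms(1) unfolding filling_inside_def by blast
      moreover have "\<beta>' ! (r - 1) = \<beta> ! (r - 1 - 1)"
        using False by (simp add: \<beta>' nth_Cons')
      ultimately show ?thesis using False by (simp add: \<beta>') linarith
    qed
  qed
  have "col_entries g c = (if c = 1 then {m} else {}) \<union> col_entries f c"
  proof (rule set_eqI, rule iffI)
    fix e
    assume "e \<in> col_entries g c"
    then show "e \<in> (if c = 1 then {m} else {}) \<union> col_entries f c"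
      by (auto simp: g col_entries_def split: if_splits)
  next
    fix e
    assume "e \<in> (if c = 1 then {m} else {}) \<union> col_entries f c"
    then consider "c = 1" "e = m" | r where "f (r, c) = Some e"
      by (auto simp: col_entries_def split: if_splits)
    then show "e \<in> col_entries g c"
    proof cases
      case 1
      then have "g (1, c) = Some e" by (simp add: g)
      then show ?thesis by (auto simp: col_entries_def)
    next
      case (2 r)
      moreover have "r \<noteq> 0" using 2 row0[of c] by (cases r) auto
      ultimately have "g (Suc r, c) = Some e" by (simp add: g)
      then show ?thesis by (auto simp: col_entries_def)
    qed
  qed
  then show "col_entries g c = (if c = 1 then insert m (col_entries f c) else col_entries f c)"
    by simp
qed

lemma fill_step_extend_row:
  assumes "filling_inside \<beta> f"
    and "fill_step i m (\<beta>, f) = Some (\<beta>', g)" and "i \<noteq> 1"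
  shows "filling_inside \<beta>' g"
    and "col_entries g c = (if c = i then insert m (col_entries f c) else col_entries f c)"
proof -
  have i: "i \<noteq> 0" "i - 1 \<in> set \<beta>"
    using assms(2,3) by (auto simp: fill_step_def Let_def split: if_splits)
  define l where "l = leftmost \<beta> (i - 1)"
  have l: "l < length \<beta>" "\<beta> ! l = i - 1"
    using leftmost_nth[OF i(2)] by (simp_all add: l_def)
  have \<beta>': "\<beta>' = \<beta>[l := i]" and g: "g = f((Suc l, i) := Some m)"
    using assms(2,3) i by (auto simp: fill_step_def Let_def l_def)
  have longer: "\<beta> ! r \<le> \<beta>[l := i] ! r" for r
    using l by (cases "r = l") auto
  show "filling_inside \<beta>' g"
    unfolding filling_inside_def
  proof (intro allI impI)
    fix r c e assume "g (r, c) = Some e"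
    then consider "(r, c) = (Suc l, i)" | "f (r, c) = Some e"
      by (auto simp: g split: if_splits)
    then show "1 \<le> r \<and> r \<le> length \<beta>' \<and> c \<le> \<beta>' ! (r - 1)"
    proof cases
      case 1
      then show ?thesis using l by (simp add: \<beta>')
    next
      case 2
      then have "1 \<le> r \<and> r \<le> length \<beta> \<and> c \<le> \<beta> ! (r - 1)"
        using assms(1) unfolding filling_inside_def by blast
      then show ?thesis using longer[of "r - 1"] by (simp add: \<beta>')
    qed
  qed
  \<comment> \<open>The new box lies just right of the end of row \<open>l + 1\<close>, so it was still empty.\<close>
  have "f (Suc l, i) = None"
  proof (rule ccontr)
    assume "f (Suc l, i) \<noteq> None"
    then have "i \<le> \<beta> ! l"
      using assms(1) unfolding filling_inside_def by fastforce
    with l i(1) show False by simp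
  qed
  then show "col_entries g c = (if c = i then insert m (col_entries f c) else col_entries f c)"
    by (simp add: g col_entries_fun_upd_fresh)
qed

lemma fill_step_col_entries:
  assumes "filling_inside \<beta> f"
    and "fill_step i m (\<beta>, f) = Some (\<beta>', g)"
  shows "filling_inside \<beta>' g"
    and "col_entries g c = (if c = i then insert m (col_entries f c) else col_entries f c)"
  using fill_step_new_row[OF assms(1)] fill_step_extend_row[OF assms] assms(2)
  by (cases "i = 1"; simp)+

lemma fill_steps_col_entries:
  assumes "foldr (\<lambda>m x. Option.bind x (fill_step (w ! (m - 1)) m)) ms (Some (\<alpha>, \<lambda>_. None))
             = Some (\<beta>, f)"
  shows "filling_inside \<beta> f \<and> (\<forall>c. col_entries f c = {m \<in> set ms. w ! (m - 1) = c})"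
  using assms
proof (induction ms arbitrary: \<beta> f)
  case Nil
  then show ?case by (auto simp: filling_inside_def col_entries_def)
next
  case (Cons m ms)
  then obtain \<beta>0 f0 where
    prev: "foldr (\<lambda>m x. Option.bind x (fill_step (w ! (m - 1)) m)) ms (Some (\<alpha>, \<lambda>_. None))
             = Some (\<beta>0, f0)"
    and step: "fill_step (w ! (m - 1)) m (\<beta>0, f0) = Some (\<beta>, f)"
    by (auto simp: bind_eq_Some_conv)
  from Cons.IH[OF prev] fill_step_col_entries[OF _ step] show ?case
    by auto
qed

lemma map_option_fst_fill_step: "map_option fst (fill_step i m st) = t_op i (fst st)"
  by (cases st) (simp add: fill_step_def t_op_def Let_def)

lemma map_option_fst_fill_steps:
  "map_option fst (foldr (\<lambda>m x. Option.bind x (fill_step (w ! (m - 1)) m)) ms s)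
   = foldr (\<lambda>i x. Option.bind x (t_op i)) (map (\<lambda>m. w ! (m - 1)) ms) (map_option fst s)"
proof (induction ms)
  case Nil
  then show ?case by simp
next
  case (Cons m ms)
  have "map_option fst (Option.bind X (fill_step i m)) = Option.bind (map_option fst X) (t_op i)"
    for X :: "(nat list \<times> filling) option" and i
    by (cases X) (simp_all add: map_option_fst_fill_step)
  with Cons.IH show ?case by simp
qed

lemma map_option_fst_fill_run: "map_option fst (fill_run w \<alpha>) = act w \<alpha>"
proof -
  have letters: "map (\<lambda>m. w ! (m - 1)) [1..<Suc (length w)] = w"
    by (rule nth_equalityI) (simp_all del: upt_Suc)
  show ?thesis
    unfolding fill_run_def act_def map_option_fst_fill_steps letters by simp
qed

definition positions :: "'a list \<Rightarrow> 'a \<Rightarrow> nat set" where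
  "positions xs x = {q. q < length xs \<and> xs ! q = x}"

lemma finite_positions: "finite (positions xs x)"
  unfolding positions_def by simp

lemma col_entries_tau:
  assumes "act w \<alpha> \<noteq> None"
  shows "col_entries (tau w \<alpha>) c = Suc ` positions w c"
proof -
  obtain \<beta> f where run: "fill_run w \<alpha> = Some (\<beta>, f)"
    using assms map_option_fst_fill_run[of w \<alpha>] by (cases "fill_run w \<alpha>") auto
  then have "col_entries f c = {m \<in> set [1..<Suc (length w)]. w ! (m - 1) = c}"
    using fill_steps_col_entries unfolding fill_run_def by blast
  also have "\<dots> = Suc ` positions w c"
  proof (rule set_eqI)
    fix m
    show "m \<in> {m \<in> set [1..<Suc (length w)]. w ! (m - 1) = c} \<longleftrightarrow> m \<in> Suc ` positions w c"
      by (cases m) (auto simp: positions_def)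
  qed
  finally show ?thesis
    using run by (simp add: tau_def)
qed

lemma is_rhook_nth_mono:
  "is_rhook w k \<Longrightarrow> a \<le> b \<Longrightarrow> b \<le> k \<Longrightarrow> w ! a \<le> w ! b"
  unfolding is_rhook_def
  using sorted_nth_mono[of "take (Suc k) w" a b] by auto

lemma is_rhook_nth_strict_antimono:
  "is_rhook w k \<Longrightarrow> k \<le> a \<Longrightarrow> a < b \<Longrightarrow> b < length w \<Longrightarrow> w ! b < w ! a"
  unfolding is_rhook_def
  using sorted_wrt_nth_less[of "(>)" "drop k w" "a - k" "b - k"] by auto

lemma is_rhook_unique:
  assumes "is_rhook w k" and "is_rhook w k'"
  shows "k = k'"
proof -
  have False if "is_rhook w a" "is_rhook w b" "a < b" for a b
    using that is_rhook_nth_mono[of w b a "Suc a"] is_rhook_nth_strict_antimono[of w a a "Suc a"]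
    unfolding is_rhook_def by auto
  then show ?thesis
    using assms by (metis linorder_neqE_nat)
qed

lemma leg_eq:
  "is_rhook w k \<Longrightarrow> leg w = set (drop k w)"
  unfolding leg_def using is_rhook_unique by (metis the_equality)

lemma is_rhook_leg_ge_not_after:
  assumes "is_rhook w k" and "k \<le> p" and "q < length w" and "w ! p \<le> w ! q"
  shows "q \<le> p"
  using is_rhook_nth_strict_antimono[OF assms(1,2), of q] assms(3,4) by fastforce

lemma is_rhook_leg_repeat_before_larger:
  assumes "is_rhook w k" and "k \<le> p" and "p < length w"
    and "p' < p" and "w ! p' = w ! p" and "w ! p' < w ! q"
  shows "p' < q"
proof (rule ccontr)
  assume "\<not> p' < q"
  with assms(6) have "q < p'"
    using nat_neq_iff by blast
  \<comment> \<open>\<open>p'\<close> cannot lie in the leg, where letters strictly decrease, so it lies in the arm.\<close>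
  have "p' < k"
    using is_rhook_nth_strict_antimono[OF assms(1) _ assms(4,3)] assms(5) by fastforce
  then have "w ! q \<le> w ! p'"
    using is_rhook_nth_mono[OF assms(1)] \<open>q < p'\<close> by simp
  with assms(6) show False by simp
qed

lemma is_rhook_leg_positions:
  assumes "is_rhook w k" and "k \<le> p" and "p < length w"
  shows "\<forall>q\<in>positions w (w ! p). q \<le> p"
    and "\<forall>q\<in>positions w (Suc (w ! p)). q < p"
    and "\<forall>q\<in>positions w (w ! p) - {p}. \<forall>q'\<in>positions w (Suc (w ! p)). q < q'"
proof -
  have last: "q \<le> p" if "q \<in> positions w x" and "w ! p \<le> x" for q x
    using that is_rhook_leg_ge_not_after[OF assms(1,2), of q] by (simp add: positions_def)
  show "\<forall>q\<in>positions w (w ! p). q \<le> p"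
    using last by blast
  show "\<forall>q\<in>positions w (Suc (w ! p)). q < p"
  proof
    fix q assume q: "q \<in> positions w (Suc (w ! p))"
    then have "q \<noteq> p" by (auto simp: positions_def)
    with last[OF q] show "q < p" by simp
  qed
  show "\<forall>q\<in>positions w (w ! p) - {p}. \<forall>q'\<in>positions w (Suc (w ! p)). q < q'"
  proof (intro ballI)
    fix q q' assume q: "q \<in> positions w (w ! p) - {p}" and q': "q' \<in> positions w (Suc (w ! p))"
    with last[of q "w ! p"] have "q < p" by auto
    with q q' show "q < q'"
      using is_rhook_leg_repeat_before_larger[OF assms, of q q'] by (simp add: positions_def)
  qed
qed

lemma connected_word_Suc_mem:
  assumes "connected_word w" and "j \<in> supp w" and "j \<noteq> Max (supp w)"
  shows "Suc j \<in> supp w"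
proof -
  obtain a b where ab: "supp w = {a..b}"
    using assms(1) by (auto simp: connected_word_def)
  with assms(2) have "Max (supp w) = b"
    by (auto intro: Max_eqI)
  with assms ab show ?thesis by auto
qed

lemma separated_Max_Min:
  fixes A B :: "'a::linorder set"
  assumes "finite A" and "finite B" and "B \<noteq> {}" and "p \<in> A"
    and "\<forall>a\<in>A. a \<le> p" and "\<forall>b\<in>B. b < p" and "\<forall>a\<in>A - {p}. \<forall>b\<in>B. a < b"
  shows "Max B < Max A \<and> (\<forall>a\<in>A. a \<noteq> Max A \<longrightarrow> a < Min B)"
proof -
  have "Max A = p"
    using assms by (intro Max_eqI) auto
  with assms show ?thesis by auto
qed

lemma separated_Max_Min_image:
  fixes A B :: "'a::linorder set" and f :: "'a \<Rightarrow> 'b::linorder"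
  assumes "strict_mono f" and "finite A" and "finite B" and "B \<noteq> {}" and "p \<in> A"
    and "\<forall>a\<in>A. a \<le> p" and "\<forall>b\<in>B. b < p" and "\<forall>a\<in>A - {p}. \<forall>b\<in>B. a < b"
  shows "Max (f ` B) < Max (f ` A) \<and> (\<forall>a\<in>f ` A. a \<noteq> Max (f ` A) \<longrightarrow> a < Min (f ` B))"
  using assms(2-) strict_mono_less[OF assms(1)] strict_mono_less_eq[OF assms(1)]
    strict_mono_eq[OF assms(1)]
  by (intro separated_Max_Min) auto

theorem mainTheorem9:
  fixes \<alpha> \<beta> w :: "nat list" and n j :: nat
  assumes "composition \<alpha>"
    and "w \<in> CRHW n"
    and "act w \<alpha> = Some \<beta>"
    and "1 \<le> j" and "j \<in> supp w" and "j \<noteq> Max (supp w)"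
    and "j \<in> leg w"
  shows "Max (col_entries (tau w \<alpha>) (j + 1)) < Max (col_entries (tau w \<alpha>) j)
     \<and> (\<forall>e \<in> col_entries (tau w \<alpha>) j. e \<noteq> Max (col_entries (tau w \<alpha>) j)
            \<longrightarrow> e < Min (col_entries (tau w \<alpha>) (j + 1)))"
proof -
  obtain k where k: "is_rhook w k" and conn: "connected_word w"
    using assms(2) by (auto simp: CRHW_def reverse_hookword_def)
  obtain i where "i < length (drop k w)" and "drop k w ! i = j"
    using assms(7) k by (auto simp: leg_eq in_set_conv_nth)
  then obtain p where p: "k \<le> p" "p < length w" "w ! p = j"
    by (intro that[of "k + i"]) auto
  have "positions w (Suc j) \<noteq> {}"
    using connected_word_Suc_mem[OF conn assms(5,6)]
    by (auto simp: supp_def positions_def in_set_conv_nth)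
  moreover have "p \<in> positions w j"
    using p by (simp add: positions_def)
  moreover have "strict_mono Suc"
    by (rule strict_monoI) simp
  ultimately have "Max (Suc ` positions w (Suc j)) < Max (Suc ` positions w j)
      \<and> (\<forall>e \<in> Suc ` positions w j. e \<noteq> Max (Suc ` positions w j)
            \<longrightarrow> e < Min (Suc ` positions w (Suc j)))"
    using is_rhook_leg_positions[OF k p(1,2), unfolded p(3)]
    by (intro separated_Max_Min_image[OF _ finite_positions finite_positions])
  then show ?thesis
    using assms(3) by (simp add: col_entries_tau)
qed

end
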